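(* Let $x=(x_1,\dots,x_n)$, $u$ an indeterminate, $t=(t_1,t_2,\dots)$. Then $$\prod_{i=1}^n(u\oplus x_i)=(u|t)^n+\sum_{r=1}^n(u|t)^{n-r}\big(1+\beta\,u\oplus t_{n+1-r}\big)G_{1^r}(x|\ominus t).$$ Setting $t_j=0$ for all $j$ this becomes $$\prod_{i=1}^n(u\oplus x_i)=u^n+(1+\beta u)\sum_{r=1}^nu^{n-r}G_{1^r}(x_1,\dots,x_n),$$ and for $r=1,\dots,n$ $$e_r(x_1,\dots,x_n)=\sum_{s=r}^n(-\beta)^{s-r}\binom{s-1}{s-r}G_{1^s}(x_1,\dots,x_n),$$ where $e_r$ is the elementary symmetric polynomial.
   Context: $\beta$ indeterminate, $x\oplus y=x+y+\beta xy$, $x\ominus y=(x-y)/(1+\beta y)$, $\ominus x=-x/(1+\beta x)$, $\ominus t=(\ominus t_1,\ominus t_2,\dots)$. $(u|t)^m=\prod_{i=1}^m(u\oplus t_i)$. $1^r$ is the partition with $r$ parts equal to $1$. Factorial Grothendieck polynomial: $G_\lambda(x|s)=\sum_T\beta^{|T|-|\lambda|}\prod_{(i,j)\in\lambda}\prod_{r\in T(i,j)}(x_r\oplus s_{r+j-i})$, summed over set-valued tableaux $T$ of shape $\lambda$ (nonempty subsets of $[n]$ in the boxes $(i,j)$, row $i$ column $j$, with $\max T(i,j)\le\min T(i,j+1)$, $\max T(i,j)<\min T(i+1,j)$), $|T|$ the total number of entries; $G_\lambda(x_1,\dots,x_n)$ denotes $G_\lambda(x|s)$ with all $s_j=0$.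 *)

theory Defs
  imports Main
begin

definition oplus :: "'a::field \<Rightarrow> 'a \<Rightarrow> 'a \<Rightarrow> 'a" where
  "oplus beta x y = x + y + beta * x * y"

definition ominus1 :: "'a::field \<Rightarrow> 'a \<Rightarrow> 'a" where
  "ominus1 beta x = - x / (1 + beta * x)"

definition uprod :: "'a::field \<Rightarrow> 'a \<Rightarrow> (nat \<Rightarrow> 'a) \<Rightarrow> nat \<Rightarrow> 'a" where
  "uprod beta u t m = (\<Prod>i=1..m. oplus beta u (t i))"

text \<open>Young diagram of a partition given as a list of (weakly decreasing) parts;
  boxes (i,j) with row i and column j, 1-based.\<close>
definition diagram :: "nat list \<Rightarrow> (nat \<times> nat) set" where
  "diagram lam = {(i,j). 1 \<le> i \<and> i \<le> length lam \<and> 1 \<le> j \<and> j \<le> lam ! (i - 1)}"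

definition svt :: "nat list \<Rightarrow> nat \<Rightarrow> ((nat \<times> nat) \<Rightarrow> nat set) set" where
  "svt lam n = {T. (\<forall>b\<in>diagram lam. T b \<noteq> {} \<and> T b \<subseteq> {1..n})
     \<and> (\<forall>b. b \<notin> diagram lam \<longrightarrow> T b = {})
     \<and> (\<forall>i j. (i,j) \<in> diagram lam \<and> (i,j+1) \<in> diagram lam \<longrightarrow> Max (T (i,j)) \<le> Min (T (i,j+1)))
     \<and> (\<forall>i j. (i,j) \<in> diagram lam \<and> (i+1,j) \<in> diagram lam \<longrightarrow> Max (T (i,j)) < Min (T (i+1,j)))}"

definition tsize :: "nat list \<Rightarrow> ((nat \<times> nat) \<Rightarrow> nat set) \<Rightarrow> nat" where
  "tsize lam T = (\<Sum>b\<in>diagram lam. card (T b))"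

definition factG :: "nat list \<Rightarrow> nat \<Rightarrow> 'a::field \<Rightarrow> (nat \<Rightarrow> 'a) \<Rightarrow> (nat \<Rightarrow> 'a) \<Rightarrow> 'a" where
  "factG lam n beta x s = (\<Sum>T\<in>svt lam n. beta ^ (tsize lam T - sum_list lam) *
      (\<Prod>(i,j)\<in>diagram lam. \<Prod>r\<in>T (i,j). oplus beta (x r) (s (r + j - i))))"

definition esym :: "nat \<Rightarrow> (nat \<Rightarrow> 'a::field) \<Rightarrow> nat \<Rightarrow> 'a" where
  "esym n x r = (\<Sum>S\<in>{S. S \<subseteq> {1..n} \<and> card S = r}. \<Prod>i\<in>S. x i)"

end

theory Submission
  imports Defs
begin

text \<open>
  In a set-valued tableau of column shape 1^r with entries at most n + 1, the largest entry
  n + 1 can only occur in the bottom box, where it is absent, alone, or joined to smaller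
  entries. This gives a Pascal-type recurrence in the number of variables,
    G_{1^(r+1)}(x_1..x_{n+1} | s) = G_{1^(r+1)}(x_1..x_n | s) (1 + \<beta> c) + G_{1^r}(x_1..x_n | s) c
  with c = x_{n+1} \<oplus> s_{n+1-r}, and all three identities follow by induction on n.
  Multiplying the expansion for n variables by u \<oplus> x_{n+1}, the coefficients telescope because
  (u \<oplus> T) + (1 + \<beta> (u \<oplus> T)) (x \<oplus> \<ominus>T) = u \<oplus> x; the second identity is the case t = 0.
  For the third, the coefficients (-\<beta>)^(s-r) binom(s-1, s-r) obey the Pascal rule matching
  e_r(x_1..x_{n+1}) = e_r(x_1..x_n) + x_{n+1} e_{r-1}(x_1..x_n).
\<close>

section \<open>The formal group law \<open>\<oplus>\<close> and its inverse\<close>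

lemma one_plus_oplus: "1 + beta * oplus beta a b = (1 + beta * a) * (1 + beta * b)"
  by (simp add: oplus_def algebra_simps)

lemma oplus_ominus1:
  assumes "1 + beta * T \<noteq> 0"
  shows "oplus beta x (ominus1 beta T) = (x - T) / (1 + beta * T)"
proof -
  define y where "y = ominus1 beta T"
  have y: "y * (1 + beta * T) = - T"
    using assms by (simp add: y_def ominus1_def)
  have "oplus beta x y * (1 + beta * T) = x * (1 + beta * T) + (1 + beta * x) * (y * (1 + beta * T))"
    by (simp add: oplus_def algebra_simps)
  also have "\<dots> = x - T"
    unfolding y by (simp add: algebra_simps)
  finally show ?thesis
    using assms by (simp add: y_def eq_divide_eq)
qed

lemma one_plus_ominus1:
  assumes "1 + beta * T \<noteq> 0"
  shows "(1 + beta * T) * (1 + beta * ominus1 beta T) = 1"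
  using assms by (simp add: ominus1_def field_simps)

lemma oplus_absorb_ominus1:
  assumes "1 + beta * T \<noteq> 0"
  shows "oplus beta u T + (1 + beta * oplus beta u T) * oplus beta x (ominus1 beta T) = oplus beta u x"
proof -
  have "(1 + beta * oplus beta u T) * oplus beta x (ominus1 beta T) = (1 + beta * u) * (x - T)"
    using assms by (simp add: one_plus_oplus oplus_ominus1)
  then show ?thesis
    by (simp add: oplus_def algebra_simps)
qed

lemma oplus_absorb_ominus1_pair:
  assumes "1 + beta * T1 \<noteq> 0" and "1 + beta * T2 \<noteq> 0"
  shows "oplus beta u T2 * (1 + beta * oplus beta u T1) * (1 + beta * oplus beta x (ominus1 beta T1))
     + (1 + beta * oplus beta u T2) * oplus beta x (ominus1 beta T2)
     = oplus beta u x * (1 + beta * oplus beta u T2)"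
proof -
  have first: "(1 + beta * oplus beta u T1) * (1 + beta * oplus beta x (ominus1 beta T1))
      = (1 + beta * u) * (1 + beta * x)"
    unfolding one_plus_oplus[of beta u] one_plus_oplus[of beta x]
    by (metis (no_types, lifting) one_plus_ominus1[OF assms(1)] mult.assoc mult.commute mult.right_neutral)
  have second: "(1 + beta * oplus beta u T2) * oplus beta x (ominus1 beta T2) = (1 + beta * u) * (x - T2)"
    using assms(2) by (simp add: one_plus_oplus oplus_ominus1)
  have "oplus beta u T2 * ((1 + beta * u) * (1 + beta * x)) + (1 + beta * u) * (x - T2)
      = oplus beta u x * (1 + beta * oplus beta u T2)"
    by (simp add: one_plus_oplus oplus_def algebra_simps)
  then show ?thesis
    by (simp only: mult.assoc first second)
qed

section \<open>Column set-valued tableaux\<close>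

text \<open>B i is the set filling box (i, 1) of a tableau of shape 1^r. Comparing all pairs of boxes,
  not only neighbouring ones (equivalent by column_tableaux_iff_consecutive), keeps adding
  and removing entries of the last box local.\<close>

definition column_tableaux :: "nat \<Rightarrow> nat \<Rightarrow> (nat \<Rightarrow> nat set) set" where
  "column_tableaux n r = {B. (\<forall>i\<in>{1..r}. B i \<noteq> {} \<and> B i \<subseteq> {1..n}) \<and> (\<forall>i. i \<notin> {1..r} \<longrightarrow> B i = {})
     \<and> (\<forall>i j a b. i < j \<longrightarrow> a \<in> B i \<longrightarrow> b \<in> B j \<longrightarrow> a < b)}"

definition column_weight :: "'a::field \<Rightarrow> (nat \<Rightarrow> 'a) \<Rightarrow> (nat \<Rightarrow> 'a) \<Rightarrow> nat \<Rightarrow> (nat \<Rightarrow> nat set) \<Rightarrow> 'a" where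
  "column_weight beta x s r B =
     (\<Prod>i=1..r. beta ^ (card (B i) - 1) * (\<Prod>a\<in>B i. oplus beta (x a) (s (a + 1 - i))))"

lemma column_weight_0 [simp]: "column_weight beta x s 0 B = 1"
  by (simp add: column_weight_def)

lemma column_weight_add_last:
  "column_weight beta x s (Suc r) (B(Suc r := X)) =
     column_weight beta x s r B * (beta ^ (card X - 1) * (\<Prod>a\<in>X. oplus beta (x a) (s (a - r))))"
proof -
  have "column_weight beta x s r (B(Suc r := X)) = column_weight beta x s r B"
    unfolding column_weight_def by (rule prod.cong) auto
  then show ?thesis
    by (simp add: column_weight_def)
qed

lemma column_tableaux_subset: "B \<in> column_tableaux n r \<Longrightarrow> B i \<subseteq> {1..n}"
  unfolding column_tableaux_def by (cases "i \<in> {1..r}") auto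

lemma column_tableauxD:
  assumes "B \<in> column_tableaux n r"
  shows column_tableaux_nonempty: "i \<in> {1..r} \<Longrightarrow> B i \<noteq> {}"
    and column_tableaux_outside: "i \<notin> {1..r} \<Longrightarrow> B i = {}"
    and column_tableaux_less: "i < j \<Longrightarrow> a \<in> B i \<Longrightarrow> b \<in> B j \<Longrightarrow> a < b"
  using assms unfolding column_tableaux_def by blast+

lemma column_tableauxI:
  assumes "\<And>i. i \<in> {1..r} \<Longrightarrow> B i \<noteq> {}" and "\<And>i. B i \<subseteq> {1..n}"
    and "\<And>i. i \<notin> {1..r} \<Longrightarrow> B i = {}"
    and "\<And>i j a b. i < j \<Longrightarrow> a \<in> B i \<Longrightarrow> b \<in> B j \<Longrightarrow> a < b"
  shows "B \<in> column_tableaux n r"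
  using assms unfolding column_tableaux_def by blast

lemma finite_column_tableaux: "finite (column_tableaux n r)"
proof (rule finite_subset)
  show "column_tableaux n r \<subseteq> {B. \<forall>i. (i \<in> {1..r} \<longrightarrow> B i \<in> Pow {1..n}) \<and> (i \<notin> {1..r} \<longrightarrow> B i = {})}"
    by (auto simp: column_tableaux_def)
qed (rule finite_set_of_finite_funs; simp)

lemma diagram_column: "diagram (replicate r 1) = (\<lambda>i. (i, 1)) ` {1..r}"
  unfolding diagram_def by auto

lemma mem_diagram_column: "(i, j) \<in> diagram (replicate r 1) \<longleftrightarrow> j = 1 \<and> i \<in> {1..r}"
  unfolding diagram_column by auto

lemma ordered_blocks_of_consecutive:
  fixes B :: "nat \<Rightarrow> 'a::order set"
  assumes step: "\<And>i a b. 1 \<le> i \<Longrightarrow> i < r \<Longrightarrow> a \<in> B i \<Longrightarrow> b \<in> B (Suc i) \<Longrightarrow> a < b"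
    and nonempty: "\<And>i. i \<in> {1..r} \<Longrightarrow> B i \<noteq> {}"
  shows "1 \<le> i \<Longrightarrow> i < j \<Longrightarrow> j \<le> r \<Longrightarrow> a \<in> B i \<Longrightarrow> b \<in> B j \<Longrightarrow> a < b"
proof (induction j arbitrary: b)
  case (Suc j)
  show ?case
  proof (cases "i = j")
    case True
    then show ?thesis using Suc.prems step by simp
  next
    case False
    then have j: "1 \<le> j" "i < j" "j < r" using Suc.prems by auto
    then obtain c where c: "c \<in> B j" using nonempty by fastforce
    have "a < c" using Suc.IH[OF _ _ _ _ c] Suc.prems j by auto
    also have "c < b" using step[OF j(1,3) c] Suc.prems(5) by simp
    finally show ?thesis .
  qed
qed simp

lemma column_tableaux_iff_consecutive:
  "B \<in> column_tableaux n r \<longleftrightarrow>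
     (\<forall>i\<in>{1..r}. B i \<noteq> {} \<and> B i \<subseteq> {1..n}) \<and> (\<forall>i. i \<notin> {1..r} \<longrightarrow> B i = {})
     \<and> (\<forall>i. 1 \<le> i \<longrightarrow> i < r \<longrightarrow> Max (B i) < Min (B (Suc i)))"
    (is "_ \<longleftrightarrow> ?blocks \<and> ?outside \<and> ?steps")
proof -
  have consecutive: "Max (B i) < Min (B (Suc i)) \<longleftrightarrow> (\<forall>a\<in>B i. \<forall>b\<in>B (Suc i). a < b)"
    if ?blocks "1 \<le> i" "i < r" for i
  proof -
    have "finite (B i)" "finite (B (Suc i))" "B i \<noteq> {}" "B (Suc i) \<noteq> {}"
      using that finite_subset[of _ "{1..n}"] by auto
    then show ?thesis by auto
  qed
  show ?thesis
  proof
    assume "B \<in> column_tableaux n r"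
    then have blocks: ?blocks and ?outside
      and ordered: "\<And>i j a b. i < j \<Longrightarrow> a \<in> B i \<Longrightarrow> b \<in> B j \<Longrightarrow> a < b"
      unfolding column_tableaux_def by auto
    moreover have ?steps
      using consecutive[OF blocks] ordered by (meson lessI)
    ultimately show "?blocks \<and> ?outside \<and> ?steps" by blast
  next
    assume "?blocks \<and> ?outside \<and> ?steps"
    then have blocks: ?blocks and outside: ?outside and steps: ?steps by auto
    have "a < b" if "i < j" "a \<in> B i" "b \<in> B j" for i j a b
    proof -
      have "i \<in> {1..r}" "j \<in> {1..r}" using outside that by auto
      show ?thesis
      proof (rule ordered_blocks_of_consecutive[of r B])
        show "a < b" if "1 \<le> i" "i < r" "a \<in> B i" "b \<in> B (Suc i)" for i a b
          using that consecutive[OF blocks] steps by blast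
        show "B i \<noteq> {}" if "i \<in> {1..r}" for i
          using that blocks by blast
      qed (use that \<open>i \<in> {1..r}\<close> \<open>j \<in> {1..r}\<close> in auto)
    qed
    then show "B \<in> column_tableaux n r"
      unfolding column_tableaux_def using blocks outside by blast
  qed
qed

lemma svt_column_iff:
  "T \<in> svt (replicate r 1) n \<longleftrightarrow> (\<lambda>i. T (i, 1)) \<in> column_tableaux n r \<and> (\<forall>i j. j \<noteq> 1 \<longrightarrow> T (i, j) = {})"
proof -
  have outside: "(\<forall>b. b \<notin> diagram (replicate r 1) \<longrightarrow> T b = {}) \<longleftrightarrow>
      (\<forall>i. i \<notin> {1..r} \<longrightarrow> T (i, 1) = {}) \<and> (\<forall>i j. j \<noteq> 1 \<longrightarrow> T (i, j) = {})"
    unfolding split_paired_All mem_diagram_column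
  proof (intro iffI conjI allI impI)
    fix a b :: nat assume "(\<forall>i. i \<notin> {1..r} \<longrightarrow> T (i, 1) = {}) \<and> (\<forall>i j. j \<noteq> 1 \<longrightarrow> T (i, j) = {})"
      and "\<not> (b = 1 \<and> a \<in> {1..r})"
    then show "T (a, b) = {}" by (cases "b = 1") auto
  qed auto
  have blocks: "(\<forall>b\<in>diagram (replicate r 1). T b \<noteq> {} \<and> T b \<subseteq> {1..n}) \<longleftrightarrow>
      (\<forall>i\<in>{1..r}. T (i, 1) \<noteq> {} \<and> T (i, 1) \<subseteq> {1..n})"
    unfolding diagram_column by simp
  have rows: "\<forall>i j. (i, j) \<in> diagram (replicate r 1) \<and> (i, j + 1) \<in> diagram (replicate r 1)
      \<longrightarrow> Max (T (i, j)) \<le> Min (T (i, j + 1))"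
    unfolding mem_diagram_column by simp
  have columns: "(\<forall>i j. (i, j) \<in> diagram (replicate r 1) \<and> (i + 1, j) \<in> diagram (replicate r 1)
      \<longrightarrow> Max (T (i, j)) < Min (T (i + 1, j))) \<longleftrightarrow>
      (\<forall>i. 1 \<le> i \<longrightarrow> i < r \<longrightarrow> Max (T (i, 1)) < Min (T (Suc i, 1)))"
    unfolding mem_diagram_column by auto
  show ?thesis
    unfolding svt_def column_tableaux_iff_consecutive mem_Collect_eq outside blocks columns
    using rows by blast
qed

lemma power_sum_diff_card:
  assumes "finite A" and "\<And>i. i \<in> A \<Longrightarrow> 1 \<le> c i"
  shows "(b::'a::comm_monoid_mult) ^ (sum c A - card A) = (\<Prod>i\<in>A. b ^ (c i - 1))"
proof -
  have "sum c A - card A = (\<Sum>i\<in>A. c i - 1)"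
    using assms by (simp add: sum_subtractf_nat)
  then show ?thesis by (simp add: power_sum)
qed

lemma factG_column_sum:
  "factG (replicate r 1) n beta x s = (\<Sum>B\<in>column_tableaux n r. column_weight beta x s r B)"
  unfolding factG_def
proof (rule sum.reindex_bij_witness[where i = "\<lambda>B (i, j). if j = 1 then B i else {}" and j = "\<lambda>T i. T (i, 1)"])
  fix T assume "T \<in> svt (replicate r 1) n"
  then have B: "(\<lambda>i. T (i, 1)) \<in> column_tableaux n r" and other: "\<forall>i j. j \<noteq> 1 \<longrightarrow> T (i, j) = {}"
    unfolding svt_column_iff by blast+
  show "(\<lambda>(i, j). if j = 1 then T (i, 1) else {}) = T"
    using other by (auto simp: fun_eq_iff)
  show "(\<lambda>i. T (i, 1)) \<in> column_tableaux n r" by (rule B)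
  have inj: "inj_on (\<lambda>i. (i, 1::nat)) {1..r}" by (auto simp: inj_on_def)
  have "1 \<le> card (T (i, 1))" if "i \<in> {1..r}" for i
    using B that finite_subset[of "T (i, 1)" "{1..n}"]
    by (auto simp: column_tableaux_def Suc_le_eq card_gt_0_iff)
  then have "beta ^ (tsize (replicate r 1) T - sum_list (replicate r 1)) = (\<Prod>i=1..r. beta ^ (card (T (i, 1)) - 1))"
    using power_sum_diff_card[of "{1..r}" "\<lambda>i. card (T (i, 1))" beta]
    unfolding tsize_def diagram_column sum.reindex[OF inj] by (simp add: sum_list_replicate)
  moreover have "(\<Prod>(i, j)\<in>diagram (replicate r 1). \<Prod>a\<in>T (i, j). oplus beta (x a) (s (a + j - i)))
     = (\<Prod>i=1..r. \<Prod>a\<in>T (i, 1). oplus beta (x a) (s (a + 1 - i)))"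
    unfolding diagram_column prod.reindex[OF inj] by simp
  ultimately show "column_weight beta x s r (\<lambda>i. T (i, 1)) = beta ^ (tsize (replicate r 1) T - sum_list (replicate r 1)) *
        (\<Prod>(i, j)\<in>diagram (replicate r 1). \<Prod>a\<in>T (i, j). oplus beta (x a) (s (a + j - i)))"
    by (simp add: column_weight_def prod.distrib)
next
  fix B assume "B \<in> column_tableaux n r"
  then show "(\<lambda>(i, j). if j = 1 then B i else {}) \<in> svt (replicate r 1) n"
    unfolding svt_column_iff by simp
qed simp

lemma column_tableaux_0: "column_tableaux n 0 = {\<lambda>_. {}}"
  unfolding column_tableaux_def by (auto simp: fun_eq_iff)

lemma column_tableaux_0_Suc: "column_tableaux 0 (Suc r) = {}"
  unfolding column_tableaux_def by auto

lemma column_tableaux_Suc_entries: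
  assumes "B \<in> column_tableaux n r"
  shows "B \<in> column_tableaux (Suc n) r"
proof (rule column_tableauxI)
  show "B i \<subseteq> {1..Suc n}" for i
    using column_tableaux_subset[OF assms, of i] by auto
qed (use column_tableauxD[OF assms] in auto)

lemma column_tableaux_without_max_entry:
  assumes "B \<in> column_tableaux (Suc n) r" and "\<And>i. Suc n \<notin> B i"
  shows "B \<in> column_tableaux n r"
proof (rule column_tableauxI)
  show "B i \<subseteq> {1..n}" for i
    using column_tableaux_subset[OF assms(1), of i] assms(2)[of i] by (auto simp: le_Suc_eq)
qed (use column_tableauxD[OF assms(1)] in auto)

lemma column_tableaux_drop_last:
  assumes "B \<in> column_tableaux n (Suc r)"
  shows "B(Suc r := {}) \<in> column_tableaux n r"
proof (rule column_tableauxI)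
  fix i
  show "i \<in> {1..r} \<Longrightarrow> (B(Suc r := {})) i \<noteq> {}"
    using column_tableaux_nonempty[OF assms, of i] by auto
  show "(B(Suc r := {})) i \<subseteq> {1..n}"
    using column_tableaux_subset[OF assms, of i] by auto
  show "i \<notin> {1..r} \<Longrightarrow> (B(Suc r := {})) i = {}"
    using column_tableaux_outside[OF assms, of i] by auto
qed (use column_tableaux_less[OF assms] in \<open>auto split: if_splits\<close>)

lemma column_tableaux_add_last:
  assumes B: "B \<in> column_tableaux n r" and "X \<noteq> {}" and "X \<subseteq> {1..n}"
    and below: "\<And>i a b. a \<in> B i \<Longrightarrow> b \<in> X \<Longrightarrow> a < b"
  shows "B(Suc r := X) \<in> column_tableaux n (Suc r)"
proof (rule column_tableauxI)
  fix i j a b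
  assume "i < j" and a: "a \<in> (B(Suc r := X)) i" and b: "b \<in> (B(Suc r := X)) j"
  consider "j = Suc r" | "i = Suc r" | "i \<noteq> Suc r" "j \<noteq> Suc r" by blast
  then show "a < b"
  proof cases
    case 1
    then show ?thesis using \<open>i < j\<close> a b below by auto
  next
    case 2
    then have "B j = {}" using \<open>i < j\<close> by (intro column_tableaux_outside[OF B]) auto
    then show ?thesis using 2 \<open>i < j\<close> b by simp
  next
    case 3
    then show ?thesis using \<open>i < j\<close> a b column_tableaux_less[OF B] by auto
  qed
qed (use assms column_tableauxD[OF B] column_tableaux_subset[OF B] in auto)

lemma column_tableaux_less_last:
  assumes B: "B \<in> column_tableaux n (Suc r)" and "a \<in> B i" and "i \<noteq> Suc r" and "b \<in> B (Suc r)"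
  shows "a < b"
proof -
  have "i \<in> {1..Suc r}"
    using assms column_tableaux_outside by blast
  with \<open>i \<noteq> Suc r\<close> have "i < Suc r" by simp
  then show ?thesis
    using column_tableaux_less[OF B] assms by blast
qed

lemma column_tableaux_below_last:
  assumes B: "B \<in> column_tableaux (Suc n) (Suc r)" and "i \<noteq> Suc r" and "a \<in> B i"
  shows "a \<le> n"
proof -
  obtain b where b: "b \<in> B (Suc r)"
    using column_tableaux_nonempty[OF B] by fastforce
  then have "a < b"
    using column_tableaux_less_last[OF B] assms by blast
  moreover have "b \<le> Suc n"
    using b column_tableaux_subset[OF B, of "Suc r"] by auto
  ultimately show ?thesis by simp
qed

lemma column_tableaux_drop_last_Suc:
  assumes B: "B \<in> column_tableaux (Suc n) (Suc r)"
  shows "B(Suc r := {}) \<in> column_tableaux n r"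
proof (rule column_tableaux_without_max_entry[OF column_tableaux_drop_last[OF B]])
  show "Suc n \<notin> (B(Suc r := {})) i" for i
    using column_tableaux_below_last[OF B, of i "Suc n"] by (cases "i = Suc r") auto
qed

lemma column_tableaux_add_max_entry:
  assumes B: "B \<in> column_tableaux n r"
  shows "B(Suc r := {Suc n}) \<in> column_tableaux (Suc n) (Suc r)"
proof (rule column_tableaux_add_last)
  show "B \<in> column_tableaux (Suc n) r" using B by (rule column_tableaux_Suc_entries)
  show "a < b" if "a \<in> B i" "b \<in> {Suc n}" for i a b
    using that column_tableaux_subset[OF B, of i] by auto
qed auto

lemma column_tableaux_insert_max_entry:
  assumes B: "B \<in> column_tableaux n (Suc r)"
  shows "B(Suc r := insert (Suc n) (B (Suc r))) \<in> column_tableaux (Suc n) (Suc r)"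
proof -
  have "B(Suc r := {}, Suc r := insert (Suc n) (B (Suc r))) \<in> column_tableaux (Suc n) (Suc r)"
  proof (rule column_tableaux_add_last)
    show "B(Suc r := {}) \<in> column_tableaux (Suc n) r"
      using B by (intro column_tableaux_Suc_entries column_tableaux_drop_last)
    show "insert (Suc n) (B (Suc r)) \<subseteq> {1..Suc n}"
      using column_tableaux_subset[OF B, of "Suc r"] by auto
    show "a < b" if "a \<in> (B(Suc r := {})) i" "b \<in> insert (Suc n) (B (Suc r))" for i a b
      using that column_tableaux_subset[OF B, of i] column_tableaux_less_last[OF B, of a i b]
      by (auto split: if_splits)
  qed simp
  then show ?thesis by simp
qed

lemma column_tableaux_remove_max_entry:
  assumes B: "B \<in> column_tableaux (Suc n) (Suc r)" and "Suc n \<in> B (Suc r)" and "B (Suc r) \<noteq> {Suc n}"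
  shows "B(Suc r := B (Suc r) - {Suc n}) \<in> column_tableaux n (Suc r)"
proof -
  have "B(Suc r := {}, Suc r := B (Suc r) - {Suc n}) \<in> column_tableaux n (Suc r)"
  proof (rule column_tableaux_add_last[OF column_tableaux_drop_last_Suc[OF B]])
    show "B (Suc r) - {Suc n} \<noteq> {}" using assms(2,3) by auto
    show "B (Suc r) - {Suc n} \<subseteq> {1..n}"
      using column_tableaux_subset[OF B, of "Suc r"] by (auto simp: le_Suc_eq)
    show "a < b" if "a \<in> (B(Suc r := {})) i" "b \<in> B (Suc r) - {Suc n}" for i a b
      using that column_tableaux_less_last[OF B, of a i b] by (auto split: if_splits)
  qed
  then show ?thesis by simp
qed

lemma column_tableaux_max_entry_absent:
  "{B \<in> column_tableaux (Suc n) (Suc r). Suc n \<notin> B (Suc r)} = column_tableaux n (Suc r)"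
proof (intro equalityI subsetI)
  fix B assume "B \<in> {B \<in> column_tableaux (Suc n) (Suc r). Suc n \<notin> B (Suc r)}"
  then have B: "B \<in> column_tableaux (Suc n) (Suc r)" and last: "Suc n \<notin> B (Suc r)" by auto
  have "Suc n \<notin> B i" for i
    using last column_tableaux_below_last[OF B, of i "Suc n"] by (cases "i = Suc r") auto
  with B show "B \<in> column_tableaux n (Suc r)"
    by (rule column_tableaux_without_max_entry)
next
  fix B assume B: "B \<in> column_tableaux n (Suc r)"
  then show "B \<in> {B \<in> column_tableaux (Suc n) (Suc r). Suc n \<notin> B (Suc r)}"
    using column_tableaux_Suc_entries[OF B] column_tableaux_subset[OF B, of "Suc r"] by auto
qed

lemma sum_column_weight_max_entry_alone:
  "(\<Sum>B | B \<in> column_tableaux (Suc n) (Suc r) \<and> B (Suc r) = {Suc n}. column_weight beta x s (Suc r) B)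
     = (\<Sum>B\<in>column_tableaux n r. column_weight beta x s r B) * oplus beta (x (Suc n)) (s (Suc n - r))"
proof -
  let ?X = "{B. B \<in> column_tableaux (Suc n) (Suc r) \<and> B (Suc r) = {Suc n}}"
  have bij: "bij_betw (\<lambda>B. B(Suc r := {Suc n})) (column_tableaux n r) ?X"
  proof (rule bij_betw_byWitness[where f' = "\<lambda>B. B(Suc r := {})"])
    show "\<forall>B\<in>column_tableaux n r. B(Suc r := {Suc n}, Suc r := {}) = B"
    proof
      fix B assume "B \<in> column_tableaux n r"
      then have "B (Suc r) = {}" by (rule column_tableaux_outside) simp
      then show "B(Suc r := {Suc n}, Suc r := {}) = B" by (simp only: fun_upd_upd fun_upd_idem)
    qed
    show "\<forall>B\<in>?X. B(Suc r := {}, Suc r := {Suc n}) = B"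
    proof
      fix B assume "B \<in> ?X"
      then have "B (Suc r) = {Suc n}" by simp
      then show "B(Suc r := {}, Suc r := {Suc n}) = B" by (simp only: fun_upd_upd fun_upd_idem)
    qed
  qed (auto intro: column_tableaux_add_max_entry column_tableaux_drop_last_Suc)
  show ?thesis
    unfolding sum.reindex_bij_betw[OF bij, symmetric]
    by (simp add: column_weight_add_last sum_distrib_right)
qed

lemma column_weight_insert_max_entry:
  assumes B: "B \<in> column_tableaux n (Suc r)"
  shows "column_weight beta x s (Suc r) (B(Suc r := insert (Suc n) (B (Suc r))))
      = column_weight beta x s (Suc r) B * (beta * oplus beta (x (Suc n)) (s (Suc n - r)))"
proof -
  have last: "Suc n \<notin> B (Suc r)" "B (Suc r) \<noteq> {}" "finite (B (Suc r))"
    using column_tableaux_subset[OF B, of "Suc r"] column_tableaux_nonempty[OF B, of "Suc r"]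
      finite_subset[of "B (Suc r)" "{1..n}"] by auto
  have "beta ^ card (B (Suc r)) = beta * beta ^ (card (B (Suc r)) - 1)"
    using last by (simp add: power_eq_if)
  moreover have "column_weight beta x s (Suc r) B = column_weight beta x s (Suc r) (B(Suc r := B (Suc r)))"
    by simp
  ultimately show ?thesis
    unfolding column_weight_add_last using last by (simp add: ac_simps)
qed

lemma sum_column_weight_max_entry_joined:
  "(\<Sum>B | B \<in> column_tableaux (Suc n) (Suc r) \<and> Suc n \<in> B (Suc r) \<and> B (Suc r) \<noteq> {Suc n}.
       column_weight beta x s (Suc r) B)
     = (\<Sum>B\<in>column_tableaux n (Suc r). column_weight beta x s (Suc r) B) * (beta * oplus beta (x (Suc n)) (s (Suc n - r)))"
proof -
  let ?X = "{B. B \<in> column_tableaux (Suc n) (Suc r) \<and> Suc n \<in> B (Suc r) \<and> B (Suc r) \<noteq> {Suc n}}"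
  let ?ins = "\<lambda>B. B(Suc r := insert (Suc n) (B (Suc r)))"
  have bij: "bij_betw ?ins (column_tableaux n (Suc r)) ?X"
  proof (rule bij_betw_byWitness[where f' = "\<lambda>B. B(Suc r := B (Suc r) - {Suc n})"])
    have max_absent: "Suc n \<notin> B (Suc r)" if "B \<in> column_tableaux n (Suc r)" for B
      using column_tableaux_subset[OF that, of "Suc r"] by auto
    then show "\<forall>B\<in>column_tableaux n (Suc r). (?ins B)(Suc r := (?ins B) (Suc r) - {Suc n}) = B"
      by simp
    show "\<forall>B\<in>?X. ?ins (B(Suc r := B (Suc r) - {Suc n})) = B"
      by (simp add: insert_absorb)
    show "?ins ` column_tableaux n (Suc r) \<subseteq> ?X"
    proof (rule image_subsetI)
      fix B assume B: "B \<in> column_tableaux n (Suc r)"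
      have "Suc n \<notin> B (Suc r)" "B (Suc r) \<noteq> {}"
        using max_absent[OF B] column_tableaux_nonempty[OF B, of "Suc r"] by auto
      then show "?ins B \<in> ?X"
        using column_tableaux_insert_max_entry[OF B] by auto
    qed
  qed (auto intro: column_tableaux_remove_max_entry)
  show ?thesis
    unfolding sum.reindex_bij_betw[OF bij, symmetric] sum_distrib_right
    by (intro sum.cong refl column_weight_insert_max_entry)
qed

lemma sum_column_weight_Suc:
  "(\<Sum>B\<in>column_tableaux (Suc n) (Suc r). column_weight beta x s (Suc r) B)
     = (\<Sum>B\<in>column_tableaux n (Suc r). column_weight beta x s (Suc r) B) * (1 + beta * oplus beta (x (Suc n)) (s (Suc n - r)))
       + (\<Sum>B\<in>column_tableaux n r. column_weight beta x s r B) * oplus beta (x (Suc n)) (s (Suc n - r))"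
proof -
  let ?X = "column_tableaux (Suc n) (Suc r)" and ?w = "column_weight beta x s (Suc r)"
  let ?absent = "{B. B \<in> ?X \<and> Suc n \<notin> B (Suc r)}"
    and ?alone = "{B. B \<in> ?X \<and> B (Suc r) = {Suc n}}"
    and ?joined = "{B. B \<in> ?X \<and> Suc n \<in> B (Suc r) \<and> B (Suc r) \<noteq> {Suc n}}"
  have fin: "finite ?absent" "finite ?alone" "finite ?joined"
    using finite_column_tableaux by simp_all
  have "?X = ?absent \<union> (?alone \<union> ?joined)" by blast
  then have "sum ?w ?X = sum ?w (?absent \<union> (?alone \<union> ?joined))" by (rule arg_cong)
  also have "\<dots> = sum ?w ?absent + sum ?w (?alone \<union> ?joined)"
    using fin by (intro sum.union_disjoint) auto
  also have "sum ?w (?alone \<union> ?joined) = sum ?w ?alone + sum ?w ?joined"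
    using fin by (intro sum.union_disjoint) auto
  finally have "sum ?w ?X = sum ?w ?absent + (sum ?w ?alone + sum ?w ?joined)" .
  then show ?thesis
    unfolding column_tableaux_max_entry_absent sum_column_weight_max_entry_alone sum_column_weight_max_entry_joined
    by (simp add: algebra_simps)
qed

lemma factG_Nil: "factG [] n beta x s = 1"
  using factG_column_sum[of 0] by (simp add: column_tableaux_0)

lemma factG_column_Suc_0: "factG (replicate (Suc r) 1) 0 beta x s = 0"
  unfolding factG_column_sum column_tableaux_0_Suc by simp

lemma factG_column_Suc_Suc:
  "factG (replicate (Suc r) 1) (Suc n) beta x s
     = factG (replicate (Suc r) 1) n beta x s * (1 + beta * oplus beta (x (Suc n)) (s (Suc n - r)))
       + factG (replicate r 1) n beta x s * oplus beta (x (Suc n)) (s (Suc n - r))"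
  unfolding factG_column_sum by (rule sum_column_weight_Suc)

lemma factG_column_eq_0: "n < r \<Longrightarrow> factG (replicate r 1) n beta x s = 0"
proof (induction n arbitrary: r)
  case 0
  then obtain r' where "r = Suc r'" by (cases r) auto
  then show ?case by (simp only: factG_column_Suc_0)
next
  case (Suc n)
  then obtain r' where "r = Suc r'" by (cases r) auto
  with Suc show ?case by (simp only: factG_column_Suc_Suc) simp
qed

section \<open>Expansion of the product of the \<open>u \<oplus> x\<^sub>i\<close>\<close>

definition expansion_coeff :: "'a::field \<Rightarrow> 'a \<Rightarrow> (nat \<Rightarrow> 'a) \<Rightarrow> nat \<Rightarrow> nat \<Rightarrow> 'a" where
  "expansion_coeff beta u t m k = uprod beta u t (m - k) * (1 + beta * oplus beta u (t (m + 1 - k)))"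

lemma uprod_Suc: "uprod beta u t (Suc m) = uprod beta u t m * oplus beta u (t (Suc m))"
  unfolding uprod_def by simp

lemma expansion_coeff_base:
  assumes "1 + beta * t (Suc n) \<noteq> 0"
  shows "uprod beta u t (Suc n) + expansion_coeff beta u t (Suc n) 1 * oplus beta y (ominus1 beta (t (Suc n)))
    = oplus beta u y * uprod beta u t n"
proof -
  have "uprod beta u t (Suc n) + expansion_coeff beta u t (Suc n) 1 * oplus beta y (ominus1 beta (t (Suc n)))
    = uprod beta u t n * (oplus beta u (t (Suc n))
        + (1 + beta * oplus beta u (t (Suc n))) * oplus beta y (ominus1 beta (t (Suc n))))"
    by (simp add: expansion_coeff_def uprod_Suc algebra_simps)
  then show ?thesis
    by (simp add: oplus_absorb_ominus1[OF assms])
qed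

lemma expansion_coeff_step:
  assumes "1 + beta * t (n + 2 - k) \<noteq> 0" and "1 + beta * t (n + 1 - k) \<noteq> 0" and "1 \<le> k" "k \<le> n"
  shows "expansion_coeff beta u t (Suc n) k * (1 + beta * oplus beta y (ominus1 beta (t (n + 2 - k))))
      + expansion_coeff beta u t (Suc n) (Suc k) * oplus beta y (ominus1 beta (t (n + 1 - k)))
    = oplus beta u y * expansion_coeff beta u t n k"
proof -
  have "Suc n - k = Suc (n - k)" using assms by simp
  then have "expansion_coeff beta u t (Suc n) k * (1 + beta * oplus beta y (ominus1 beta (t (n + 2 - k))))
      + expansion_coeff beta u t (Suc n) (Suc k) * oplus beta y (ominus1 beta (t (n + 1 - k)))
    = uprod beta u t (n - k) *
      (oplus beta u (t (n + 1 - k)) * (1 + beta * oplus beta u (t (n + 2 - k)))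
         * (1 + beta * oplus beta y (ominus1 beta (t (n + 2 - k))))
       + (1 + beta * oplus beta u (t (n + 1 - k))) * oplus beta y (ominus1 beta (t (n + 1 - k))))"
    using assms by (simp add: expansion_coeff_def uprod_Suc Suc_diff_le algebra_simps)
  also have "\<dots> = oplus beta u y * expansion_coeff beta u t n k"
    unfolding oplus_absorb_ominus1_pair[OF assms(1,2)]
    using assms by (simp add: expansion_coeff_def Suc_diff_le)
  finally show ?thesis .
qed

lemma sum_factG_column_Suc:
  fixes beta :: "'a::field" and y s D :: "nat \<Rightarrow> 'a" and n :: nat
  defines "G \<equiv> \<lambda>m r. factG (replicate r 1) m beta y s"
    and "c \<equiv> \<lambda>k. oplus beta (y (Suc n)) (s (n + 2 - k))"
  shows "(\<Sum>k=1..Suc n. D k * G (Suc n) k)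
    = D 1 * c 1 + (\<Sum>k=1..n. (D k * (1 + beta * c k) + D (Suc k) * c (Suc k)) * G n k)"
proof -
  have G_Suc: "G (Suc n) (Suc k) = G n (Suc k) * (1 + beta * c (Suc k)) + G n k * c (Suc k)" for k
    unfolding G_def c_def factG_column_Suc_Suc by simp
  have "(\<Sum>k=1..Suc n. D k * G (Suc n) k) = (\<Sum>k=0..n. D (Suc k) * G (Suc n) (Suc k))"
    using sum.shift_bounds_cl_Suc_ivl[of "\<lambda>k. D k * G (Suc n) k" 0 n] by simp
  also have "\<dots> = (\<Sum>k=0..n. D (Suc k) * (1 + beta * c (Suc k)) * G n (Suc k))
        + (\<Sum>k=0..n. D (Suc k) * c (Suc k) * G n k)"
    unfolding G_Suc by (simp add: sum.distrib algebra_simps)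
  also have "(\<Sum>k=0..n. D (Suc k) * (1 + beta * c (Suc k)) * G n (Suc k))
      = (\<Sum>k=1..n. D k * (1 + beta * c k) * G n k)"
  proof -
    have "G n (Suc n) = 0"
      unfolding G_def by (rule factG_column_eq_0) simp
    then show ?thesis
      using sum.shift_bounds_cl_Suc_ivl[of "\<lambda>k. D k * (1 + beta * c k) * G n k" 0 n] by simp
  qed
  also have "(\<Sum>k=0..n. D (Suc k) * c (Suc k) * G n k)
      = D 1 * c 1 + (\<Sum>k=1..n. D (Suc k) * c (Suc k) * G n k)"
    by (simp add: sum.atLeast_Suc_atMost G_def factG_Nil)
  finally show ?thesis
    by (simp add: sum.distrib algebra_simps)
qed

lemma prod_oplus_expansion:
  assumes t: "\<And>j. 1 \<le> j \<Longrightarrow> 1 + beta * t j \<noteq> 0"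
  shows "(\<Prod>i=1..n. oplus beta u (x i)) = uprod beta u t n
    + (\<Sum>r=1..n. expansion_coeff beta u t n r * factG (replicate r 1) n beta x (\<lambda>j. ominus1 beta (t j)))"
proof (induction n)
  case 0
  then show ?case by (simp add: uprod_def)
next
  case (Suc n)
  define G where "G = (\<lambda>m r. factG (replicate r 1) m beta x (\<lambda>j. ominus1 beta (t j)))"
  define D where "D = expansion_coeff beta u t"
  define c where "c = (\<lambda>k. oplus beta (x (Suc n)) (ominus1 beta (t (n + 2 - k))))"
  have base: "uprod beta u t (Suc n) + D (Suc n) 1 * c 1 = oplus beta u (x (Suc n)) * uprod beta u t n"
    unfolding D_def c_def using expansion_coeff_base t[of "Suc n"] by simp
  have step: "D (Suc n) k * (1 + beta * c k) + D (Suc n) (Suc k) * c (Suc k)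
      = oplus beta u (x (Suc n)) * D n k" if "k \<in> {1..n}" for k
  proof -
    have "1 + beta * t (n + 2 - k) \<noteq> 0" "1 + beta * t (n + 1 - k) \<noteq> 0"
      using that t by auto
    from expansion_coeff_step[OF this, of u "x (Suc n)"] that show ?thesis
      unfolding D_def c_def by simp
  qed
  have "uprod beta u t (Suc n) + (\<Sum>k=1..Suc n. D (Suc n) k * G (Suc n) k)
      = (uprod beta u t (Suc n) + D (Suc n) 1 * c 1)
        + (\<Sum>k=1..n. (D (Suc n) k * (1 + beta * c k) + D (Suc n) (Suc k) * c (Suc k)) * G n k)"
    unfolding G_def c_def sum_factG_column_Suc by simp
  also have "\<dots> = oplus beta u (x (Suc n)) * uprod beta u t n
      + (\<Sum>k=1..n. oplus beta u (x (Suc n)) * D n k * G n k)"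
    unfolding base using step by (auto intro!: sum.cong)
  also have "\<dots> = oplus beta u (x (Suc n)) * (uprod beta u t n + (\<Sum>k=1..n. D n k * G n k))"
    by (simp add: sum_distrib_left algebra_simps)
  also have "\<dots> = (\<Prod>i=1..Suc n. oplus beta u (x i))"
    using Suc.IH by (simp add: D_def G_def)
  finally show ?case
    by (simp add: D_def G_def)
qed

section \<open>Elementary symmetric polynomials\<close>

lemma esym_0: "esym n x 0 = 1"
proof -
  have "{S. S \<subseteq> {1..n} \<and> card S = 0} = {{}}"
  proof (intro equalityI subsetI)
    fix S assume "S \<in> {S. S \<subseteq> {1..n} \<and> card S = 0}"
    then have "finite S" "card S = 0" using finite_subset[of S "{1..n}"] by auto
    then show "S \<in> {{}}" by simp
  qed auto
  then show ?thesis unfolding esym_def by simp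
qed

lemma esym_0_Suc: "esym 0 x (Suc r) = 0"
proof -
  have "{S. S \<subseteq> {1..0::nat} \<and> card S = Suc r} = {}" by auto
  then show ?thesis unfolding esym_def by (simp only: sum.empty)
qed

lemma subsets_card_Suc_insert:
  assumes "finite A" and "a \<notin> A"
  shows "{S. S \<subseteq> insert a A \<and> card S = Suc k}
    = {S. S \<subseteq> A \<and> card S = Suc k} \<union> insert a ` {S. S \<subseteq> A \<and> card S = k}"
proof (intro equalityI subsetI)
  fix S assume S: "S \<in> {S. S \<subseteq> insert a A \<and> card S = Suc k}"
  then have "finite S" using assms(1) finite_subset[of S "insert a A"] by simp
  show "S \<in> {S. S \<subseteq> A \<and> card S = Suc k} \<union> insert a ` {S. S \<subseteq> A \<and> card S = k}"
  proof (cases "a \<in> S")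
    case True
    then have "S = insert a (S - {a})" and "S - {a} \<in> {S. S \<subseteq> A \<and> card S = k}"
      using S \<open>finite S\<close> by auto
    then show ?thesis by (blast intro: image_eqI)
  next
    case False
    then show ?thesis using S by auto
  qed
next
  fix S assume "S \<in> {S. S \<subseteq> A \<and> card S = Suc k} \<union> insert a ` {S. S \<subseteq> A \<and> card S = k}"
  then consider "S \<in> {S. S \<subseteq> A \<and> card S = Suc k}" | T where "T \<subseteq> A" "card T = k" "S = insert a T"
    by blast
  then show "S \<in> {S. S \<subseteq> insert a A \<and> card S = Suc k}"
  proof cases
    case 2
    then have "finite T" "a \<notin> T"
      using assms finite_subset[of T A] by auto
    with 2 show ?thesis by auto
  qed auto
qed

lemma esym_Suc_Suc: "esym (Suc n) x (Suc r) = esym n x (Suc r) + x (Suc n) * esym n x r"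
proof -
  let ?S = "\<lambda>k. {S. S \<subseteq> {1..n} \<and> card S = k}"
  have fin: "finite (?S k)" for k
    by (rule finite_subset[of _ "Pow {1..n}"]) auto
  have max_absent: "Suc n \<notin> S" if "S \<in> ?S k" for S k
    using that by auto
  have inj: "inj_on (insert (Suc n)) (?S r)"
    by (rule inj_onI) (metis Diff_insert_absorb max_absent)
  have ivl: "{1..Suc n} = insert (Suc n) {1..n}" and "Suc n \<notin> {1..n}" by auto
  have "esym (Suc n) x (Suc r) = (\<Sum>S\<in>?S (Suc r). prod x S) + (\<Sum>S\<in>insert (Suc n) ` ?S r. prod x S)"
    unfolding esym_def ivl subsets_card_Suc_insert[OF finite_atLeastAtMost \<open>Suc n \<notin> {1..n}\<close>]
    using fin by (intro sum.union_disjoint) auto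
  also have "(\<Sum>S\<in>insert (Suc n) ` ?S r. prod x S) = (\<Sum>S\<in>?S r. x (Suc n) * prod x S)"
    unfolding sum.reindex[OF inj] comp_def
  proof (rule sum.cong[OF refl])
    fix S assume "S \<in> ?S r"
    then have "finite S" "Suc n \<notin> S" using finite_subset[of S "{1..n}"] max_absent by auto
    then show "prod x (insert (Suc n) S) = x (Suc n) * prod x S" by simp
  qed
  finally show ?thesis
    unfolding esym_def by (simp add: sum_distrib_left)
qed

definition esym_coeff :: "'a::field \<Rightarrow> nat \<Rightarrow> nat \<Rightarrow> 'a" where
  "esym_coeff beta r s = (if r \<le> s then (- beta) ^ (s - r) * of_nat ((s - 1) choose (s - r)) else 0)"

lemma esym_coeff_Suc:
  "beta * esym_coeff beta (Suc r) s + esym_coeff beta (Suc r) (Suc s) = esym_coeff beta r s"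
proof (cases "r < s")
  case True
  then obtain m where s: "s = Suc (r + m)" by (metis add_Suc less_iff_Suc_add)
  have "(- beta) ^ Suc m * of_nat ((r + m) choose Suc m)
      = beta * ((- beta) ^ m * of_nat ((r + m) choose m))
        + (- beta) ^ Suc m * of_nat (Suc (r + m) choose Suc m)"
    by (simp add: algebra_simps)
  then show ?thesis
    unfolding esym_coeff_def s by simp
next
  case False
  then show ?thesis by (auto simp: esym_coeff_def)
qed

lemma esym_coeff_0: "esym_coeff beta 0 s = (if s = 0 then 1 else 0)"
  by (cases s) (simp_all add: esym_coeff_def binomial_eq_0)

lemma sum_esym_coeff_atMost_Suc:
  assumes "1 \<le> r"
  shows "(\<Sum>s\<le>Suc m. esym_coeff beta r s * f s) = (\<Sum>k\<le>m. esym_coeff beta r (Suc k) * f (Suc k))"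
proof -
  have "esym_coeff beta r 0 = 0" using assms by (simp add: esym_coeff_def)
  then show ?thesis unfolding sum.atMost_Suc_shift by simp
qed

lemma esym_eq_sum_esym_coeff:
  "esym n x r = (\<Sum>s\<le>n. esym_coeff beta r s * factG (replicate s 1) n beta x (\<lambda>_. 0))"
proof (induction n arbitrary: r)
  case 0
  then show ?case by (cases r) (simp_all add: esym_0 esym_0_Suc esym_coeff_def factG_Nil)
next
  case (Suc n)
  define G where "G = (\<lambda>m k. factG (replicate k 1) m beta x (\<lambda>_. 0))"
  have G_Suc: "G (Suc n) (Suc k) = G n (Suc k) * (1 + beta * x (Suc n)) + G n k * x (Suc n)" for k
    unfolding G_def factG_column_Suc_Suc by (simp add: oplus_def)
  show ?case
  proof (cases r)
    case 0
    then show ?thesis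
      unfolding sum.atMost_Suc_shift by (simp add: esym_0 esym_coeff_0 factG_Nil)
  next
    case (Suc r')
    then have shift: "(\<Sum>s\<le>Suc m. esym_coeff beta r s * f s) = (\<Sum>k\<le>m. esym_coeff beta r (Suc k) * f (Suc k))"
      for m and f :: "nat \<Rightarrow> 'a"
      by (intro sum_esym_coeff_atMost_Suc) simp
    have "G n (Suc n) = 0" unfolding G_def by (rule factG_column_eq_0) simp
    moreover have IH: "esym n x k = (\<Sum>s\<le>n. esym_coeff beta k s * G n s)" for k
      using Suc.IH unfolding G_def .
    ultimately have lower: "(\<Sum>k\<le>n. esym_coeff beta r (Suc k) * G n (Suc k)) = esym n x r"
      unfolding shift[of "G n" n, symmetric] by simp
    have "(\<Sum>s\<le>Suc n. esym_coeff beta r s * G (Suc n) s)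
        = (\<Sum>k\<le>n. esym_coeff beta r (Suc k) * G n (Suc k)) * (1 + beta * x (Suc n))
          + x (Suc n) * (\<Sum>k\<le>n. esym_coeff beta r (Suc k) * G n k)"
      unfolding shift G_Suc by (simp add: sum.distrib sum_distrib_left sum_distrib_right algebra_simps)
    also have "\<dots> = esym n x r + x (Suc n) * (beta * esym n x r + (\<Sum>k\<le>n. esym_coeff beta r (Suc k) * G n k))"
      unfolding lower by (simp add: algebra_simps)
    also have "\<dots> = esym n x r + x (Suc n) * (\<Sum>k\<le>n. (beta * esym_coeff beta r k + esym_coeff beta r (Suc k)) * G n k)"
      unfolding IH[of r] by (simp add: sum.distrib sum_distrib_left algebra_simps)
    also have "\<dots> = esym n x r + x (Suc n) * esym n x r'"
      unfolding Suc esym_coeff_Suc IH[of r'] ..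
    also have "\<dots> = esym (Suc n) x r"
      by (simp add: Suc esym_Suc_Suc)
    finally show ?thesis by (simp add: G_def)
  qed
qed

lemma esym_eq_sum_factG:
  "esym n x r = (\<Sum>s=r..n. (- beta) ^ (s - r) * of_nat ((s - 1) choose (s - r))
     * factG (replicate s 1) n beta x (\<lambda>_. 0))"
proof -
  have "esym n x r = (\<Sum>s\<le>n. esym_coeff beta r s * factG (replicate s 1) n beta x (\<lambda>_. 0))"
    by (rule esym_eq_sum_esym_coeff)
  also have "\<dots> = (\<Sum>s=r..n. esym_coeff beta r s * factG (replicate s 1) n beta x (\<lambda>_. 0))"
    by (rule sum.mono_neutral_right) (auto simp: esym_coeff_def)
  finally show ?thesis
    by (simp add: esym_coeff_def)
qed

lemma prod_oplus_expansion_zero: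
  "(\<Prod>i=1..n. oplus beta u (x i))
     = u ^ n + (1 + beta * u) * (\<Sum>r=1..n. u ^ (n - r) * factG (replicate r 1) n beta x (\<lambda>_. 0))"
proof -
  have "ominus1 beta 0 = 0" and "uprod beta u (\<lambda>_. 0) m = u ^ m" for m
    by (simp_all add: ominus1_def uprod_def oplus_def)
  then show ?thesis
    using prod_oplus_expansion[where t = "\<lambda>_. 0" and beta = beta and n = n and u = u and x = x]
    by (simp add: expansion_coeff_def oplus_def sum_distrib_left algebra_simps)
qed

theorem mainTheorem5:
  fixes beta u :: "'a::field" and x :: "nat \<Rightarrow> 'a" and n :: nat
  shows "(\<forall>t :: nat \<Rightarrow> 'a. (\<forall>j\<ge>1. 1 + beta * t j \<noteq> 0) \<longrightarrow>
           (\<Prod>i=1..n. oplus beta u (x i)) =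
             uprod beta u t n + (\<Sum>r=1..n. uprod beta u t (n - r)
               * (1 + beta * oplus beta u (t (n + 1 - r)))
               * factG (replicate r 1) n beta x (\<lambda>j. ominus1 beta (t j))))
       \<and> (\<Prod>i=1..n. oplus beta u (x i)) =
           u ^ n + (1 + beta * u) * (\<Sum>r=1..n. u ^ (n - r) * factG (replicate r 1) n beta x (\<lambda>_. 0))
       \<and> (\<forall>r\<in>{1..n}. esym n x r =
           (\<Sum>s=r..n. (- beta) ^ (s - r) * of_nat ((s - 1) choose (s - r))
                        * factG (replicate s 1) n beta x (\<lambda>_. 0)))"
  using prod_oplus_expansion[unfolded expansion_coeff_def] prod_oplus_expansion_zero esym_eq_sum_factG
  by blast

end
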